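(* Let $0<q<1$, let $\alpha\ge0$ and $k,N\ge1$ be integers. Then \[ M_\alpha(k,N)=\frac{q^{k(2-2N-\alpha)}}{N\,(1-q^2)^k}\, \frac{(q^{2N};q^2)_k\,(q^{2N+2\alpha};q^2)_k}{(q^2;q^2)_k}\; {}_3\phi_2\!\left(\begin{matrix}q^{2-2k},\,q^{2-2N},\,q^{2-2N-2\alpha}\\ q^{2-2N-2k},\,q^{2-2N-2\alpha-2k}\end{matrix};q^2,\,q^{-2k}\right), \] where the ${}_3\phi_2$ is the terminating sum over $l=0,\dots,k-1$.
   Context: Notation: $(a;q)_n=\prod_{i=0}^{n-1}(1-aq^i)$ (with $(a;q)_0=1$); ${}_3\phi_2\!\left(\begin{smallmatrix}a_1,a_2,a_3\\ b_1,b_2\end{smallmatrix};p,z\right)=\sum_{l\ge0}\frac{(a_1;p)_l(a_2;p)_l(a_3;p)_l}{(b_1;p)_l(b_2;p)_l(p;p)_l}z^l$. $s_\lambda$ denotes the Schur function of a partition $\lambda$; $s_\lambda(1,q^2,\dots,q^{2m-2})$ is its evaluation at $m$ variables $q^{2i}$, and $s_\lambda(1,q^2,q^4,\dots)$ its principal specialisation in infinitely many variables. $M_\alpha(k,N)$ is the $k$-th moment $\frac1N\mathbb{E}[\sum_{i=1}^N X_i^k]=\frac1N\mathbb{E}[p_k(X_1,\dots,X_N)]$ of the normalised one-point function of the discrete $q$-Laguerre orthogonal polynomial ensemble with parameter $\alpha$. It is understood here as determined by linearity from the following formula (due to Morozov–Popolitov–Shakirov, taken as given) for expectations of Schur polynomials: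 for every partition $\lambda$ of size $|\lambda|=k$, \[ \mathbb{E}[s_\lambda(X_1,\dots,X_N)]=\frac{q^{k(2-2N-\alpha)}}{(1-q^2)^k}\, \frac{s_\lambda(1,q^2,\dots,q^{2N-2})\,s_\lambda(1,q^2,\dots,q^{2N+2\alpha-2})}{s_\lambda(1,q^2,q^4,\dots)}, \] together with the expansion of the power sum $p_k=\sum_{|\lambda|=k}\chi^\lambda_{(k)}s_\lambda$ in Schur functions ($\chi^\lambda_{(k)}$ the irreducible symmetric-group character evaluated at a $k$-cycle). *)

theory Defs
  imports Complex_Main "HOL-Library.FuncSet"
begin

definition is_partition :: "nat \<Rightarrow> nat list \<Rightarrow> bool" where
  "is_partition k lam \<longleftrightarrow> sorted_wrt (\<ge>) lam \<and> (\<forall>x\<in>set lam. 0 < x) \<and> sum_list lam = k"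

definition partitions :: "nat \<Rightarrow> nat list set" where
  "partitions k = {lam. is_partition k lam}"

definition cells :: "nat list \<Rightarrow> (nat \<times> nat) set" where
  "cells lam = {(i, j). i < length lam \<and> j < lam ! i}"

definition ssyt :: "nat list \<Rightarrow> nat \<Rightarrow> (nat \<times> nat \<Rightarrow> nat) set" where
  "ssyt lam n = {T \<in> cells lam \<rightarrow>\<^sub>E {..<n}.
      (\<forall>i j. (i, Suc j) \<in> cells lam \<longrightarrow> T (i, j) \<le> T (i, Suc j)) \<and>
      (\<forall>i j. (Suc i, j) \<in> cells lam \<longrightarrow> T (i, j) < T (Suc i, j))}"

definition schur :: "nat list \<Rightarrow> nat \<Rightarrow> (nat \<Rightarrow> real) \<Rightarrow> real" where
  "schur lam n x = (\<Sum>T\<in>ssyt lam n. \<Prod>c\<in>cells lam. x (T c))"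

definition schur_pspec :: "nat list \<Rightarrow> nat \<Rightarrow> real \<Rightarrow> real" where
  "schur_pspec lam m q = schur lam m (\<lambda>i. q ^ (2 * i))"

definition schur_pspec_inf :: "nat list \<Rightarrow> real \<Rightarrow> real" where
  "schur_pspec_inf lam q = lim (\<lambda>m. schur_pspec lam m q)"

text \<open>chi k lam = character of irreducible S_k-module lam at a k-cycle, characterised
  (uniquely) by the expansion p_k = sum_{|lam|=k} chi^lam_(k) s_lam, valid in any number of
  variables.\<close>
definition chi_cycle :: "nat \<Rightarrow> nat list \<Rightarrow> real" where
  "chi_cycle k = (THE c. (\<forall>lam. lam \<notin> partitions k \<longrightarrow> c lam = 0) \<and>
      (\<forall>n (x :: nat \<Rightarrow> real). (\<Sum>i<n. x i ^ k) = (\<Sum>lam\<in>partitions k. c lam * schur lam n x)))"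

text \<open>E[s_lam(X_1..X_N)] (Morozov--Popolitov--Shakirov), k = |lam|.\<close>
definition E_schur :: "real \<Rightarrow> nat \<Rightarrow> nat \<Rightarrow> nat list \<Rightarrow> real" where
  "E_schur q alpha N lam =
     (let k = sum_list lam in
      q powi (int k * (2 - 2 * int N - int alpha)) / (1 - q^2) ^ k *
      (schur_pspec lam N q * schur_pspec lam (N + alpha) q / schur_pspec_inf lam q))"

definition moment :: "real \<Rightarrow> nat \<Rightarrow> nat \<Rightarrow> nat \<Rightarrow> real" where
  "moment q alpha k N = (1 / real N) * (\<Sum>lam\<in>partitions k. chi_cycle k lam * E_schur q alpha N lam)"

definition qpoch :: "real \<Rightarrow> real \<Rightarrow> nat \<Rightarrow> real" where
  "qpoch a p n = (\<Prod>i<n. 1 - a * p ^ i)"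

definition phi32_trunc :: "real \<Rightarrow> real \<Rightarrow> real \<Rightarrow> real \<Rightarrow> real \<Rightarrow> real \<Rightarrow> real \<Rightarrow> nat \<Rightarrow> real" where
  "phi32_trunc a1 a2 a3 b1 b2 p z n =
     (\<Sum>l<n. qpoch a1 p l * qpoch a2 p l * qpoch a3 p l /
             (qpoch b1 p l * qpoch b2 p l * qpoch p p l) * z ^ l)"

end

theory Submission
  imports Defs
begin

text \<open>
  Only hooks contribute to p_k: removing the largest letter from a tableau of hook shape gives
  a branching rule for s_(a,1^b), from which p_k = sum_(r<k) (-1)^r s_(k-r,1^r) follows by
  induction on the number of variables. As the Schur polynomials of degree k are linearly
  independent (under a suitable specialisation each has its own leading monomial), this
  determines the character values at a k-cycle. The same branching rule gives the principal
  specialisation of a hook in closed form, s_(a,1^b)(1, Q, ..., Q^(m-1)) = c_(a,b) (Q^(m-b); Q)_(a+b),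
  where c_(a,b) is its value in infinitely many variables. So the moment is a sum over r < k of
  products of q-Pochhammer symbols, and the reflection
  (Q^(1-n); Q)_r = (-1)^r Q^(r(r+1)/2 - n r) (Q^(n-r); Q)_r turns the r-th summand into the r-th
  term of the terminating 3phi2.
\<close>

section \<open>The branching rule for hooks\<close>

lemma finite_cells: "finite (cells lam)"
proof -
  have "cells lam \<subseteq> (SIGMA i:{..<length lam}. {..<lam ! i})"
    unfolding cells_def by auto
  thus ?thesis by (rule finite_subset) auto
qed

lemma finite_ssyt: "finite (ssyt lam n)"
proof -
  have "ssyt lam n \<subseteq> cells lam \<rightarrow>\<^sub>E {..<n}"
    unfolding ssyt_def by auto
  thus ?thesis by (rule finite_subset) (auto intro: finite_PiE finite_cells)
qed

lemma ssyt_entry_less: "T \<in> ssyt lam n \<Longrightarrow> c \<in> cells lam \<Longrightarrow> T c < n"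
  unfolding ssyt_def by (auto simp: PiE_iff)

lemma ssyt_undefined: "T \<in> ssyt lam n \<Longrightarrow> c \<notin> cells lam \<Longrightarrow> T c = undefined"
  unfolding ssyt_def by (cases c) (auto simp: PiE_iff extensional_def)

definition tableau_monomial :: "nat list \<Rightarrow> (nat \<Rightarrow> real) \<Rightarrow> (nat \<times> nat \<Rightarrow> nat) \<Rightarrow> real" where
  "tableau_monomial lam x T = (\<Prod>c\<in>cells lam. x (T c))"

lemma schur_eq_sum_tableau_monomial: "schur lam n x = (\<Sum>T\<in>ssyt lam n. tableau_monomial lam x T)"
  unfolding schur_def tableau_monomial_def ..

lemma sum_tableau_monomial_fill_cell:
  assumes cells: "cells lam = insert c (cells lam')" "c \<notin> cells lam'"
    and S: "S \<subseteq> ssyt lam' n"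
  shows "(\<Sum>T\<in>(\<lambda>U. U(c := m)) ` S. tableau_monomial lam x T)
       = x m * (\<Sum>U\<in>S. tableau_monomial lam' x U)"
proof -
  have "inj_on (\<lambda>U. U(c := m)) S"
  proof (rule inj_on_inverseI)
    fix U assume "U \<in> S"
    with S cells(2) have "U c = undefined" by (auto intro: ssyt_undefined)
    thus "(U(c := m))(c := undefined) = U" by auto
  qed
  moreover have "tableau_monomial lam x (U(c := m)) = x m * tableau_monomial lam' x U" for U
  proof -
    have "tableau_monomial lam x (U(c := m)) = x m * (\<Prod>d\<in>cells lam'. x ((U(c := m)) d))"
      unfolding tableau_monomial_def cells(1) using cells(2) finite_cells by simp
    also have "(\<Prod>d\<in>cells lam'. x ((U(c := m)) d)) = tableau_monomial lam' x U"
      unfolding tableau_monomial_def using cells(2) by (intro prod.cong) auto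
    finally show ?thesis .
  qed
  ultimately show ?thesis
    by (simp add: sum.reindex sum_distrib_left)
qed

lemma lift_Suc_mono_le_bounded:
  assumes "\<And>j. Suc j < a \<Longrightarrow> (f j :: nat) \<le> f (Suc j)" "j \<le> j'" "j' < a"
  shows "f j \<le> f j'"
  using assms(2,3)
proof (induction j')
  case (Suc j')
  show ?case
  proof (cases "j = Suc j'")
    case False
    with Suc have "f j \<le> f j'" by simp
    also have "\<dots> \<le> f (Suc j')" using assms(1) Suc.prems by simp
    finally show ?thesis .
  qed simp
qed simp

lemma lift_Suc_mono_less_bounded:
  assumes "\<And>i. Suc i \<le> b \<Longrightarrow> (f i :: nat) < f (Suc i)" "i < i'" "i' \<le> b"
  shows "f i < f i'"
  using assms(2,3)
proof (induction i')
  case (Suc i')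
  show ?case
  proof (cases "i = i'")
    case False
    with Suc have "f i < f i'" by simp
    also have "\<dots> < f (Suc i')" using assms(1) Suc.prems by simp
    finally show ?thesis .
  qed (use assms(1) Suc.prems in simp)
qed simp

definition hook :: "nat \<Rightarrow> nat \<Rightarrow> nat list" where
  "hook a b = a # replicate b 1"

lemma cells_hook: "cells (hook a b) = {(0, j) |j. j < a} \<union> {(i, 0) |i. 0 < i \<and> i \<le> b}"
  unfolding cells_def hook_def by (auto simp: nth_Cons split: nat.splits)

lemma hook_arm_cell: "j < a \<Longrightarrow> (0, j) \<in> cells (hook a b)"
  by (simp add: cells_hook)

lemma hook_leg_cell: "0 < i \<Longrightarrow> i \<le> b \<Longrightarrow> (i, 0) \<in> cells (hook a b)"
  by (simp add: cells_hook)

lemma hook_cell_cases: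
  assumes "c \<in> cells (hook a b)"
  obtains j where "c = (0, j)" "j < a" | i where "c = (i, 0)" "0 < i" "i \<le> b"
  using assms unfolding cells_hook by blast

lemma cells_hook_insert_arm_end:
  assumes "0 < a"
  shows "cells (hook a b) = insert (0, a - 1) (cells (hook (a - 1) b))" "(0, a - 1) \<notin> cells (hook (a - 1) b)"
  using assms unfolding cells_hook by auto

lemma cells_hook_insert_leg_end:
  assumes "1 \<le> b"
  shows "cells (hook a b) = insert (b, 0) (cells (hook a (b - 1)))" "(b, 0) \<notin> cells (hook a (b - 1))"
  using assms unfolding cells_hook by auto

lemma ssyt_hook_iff:
  "T \<in> ssyt (hook a b) n \<longleftrightarrow> T \<in> cells (hook a b) \<rightarrow>\<^sub>E {..<n} \<and>
     (\<forall>j. Suc j < a \<longrightarrow> T (0, j) \<le> T (0, Suc j)) \<and>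
     (\<forall>i. Suc i \<le> b \<longrightarrow> T (i, 0) < T (Suc i, 0))"
  unfolding ssyt_def cells_hook by auto

lemma ssyt_hook_arm_le:
  assumes "T \<in> ssyt (hook a b) n" "j < a"
  shows "T (0, j) \<le> T (0, a - 1)"
  using assms lift_Suc_mono_le_bounded[of a "\<lambda>j. T (0, j)" j "a - 1"]
  unfolding ssyt_hook_iff by auto

lemma ssyt_hook_leg_less:
  assumes "T \<in> ssyt (hook a b) n" "i < i'" "i' \<le> b"
  shows "T (i, 0) < T (i', 0)"
  using assms lift_Suc_mono_less_bounded[of b "\<lambda>i. T (i, 0)" i i']
  unfolding ssyt_hook_iff by auto

text \<open>The largest letter \<open>m\<close> of a tableau of hook shape can only sit at the end of the arm
  or at the end of the leg; this splits \<open>ssyt (hook a b) (Suc m)\<close> into three parts.\<close>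
lemma ssyt_hook_avoiding_max:
  assumes "0 < a"
  shows "{T \<in> ssyt (hook a b) (Suc m). T (0, a - 1) \<noteq> m \<and> \<not> (1 \<le> b \<and> T (b, 0) = m)}
        = ssyt (hook a b) m" (is "?L = ?R")
proof
  show "?L \<subseteq> ?R"
  proof
    fix T assume T: "T \<in> ?L"
    hence TS: "T \<in> ssyt (hook a b) (Suc m)" by simp
    have "T c < m" if "c \<in> cells (hook a b)" for c
      using that
    proof (cases rule: hook_cell_cases)
      case (1 j)
      have "T (0, j) \<le> T (0, a - 1)" using ssyt_hook_arm_le[OF TS 1(2)] .
      moreover have "T (0, a - 1) < Suc m"
        using ssyt_entry_less[OF TS hook_arm_cell[of "a - 1" a b]] assms by simp
      ultimately show ?thesis using T 1 by simp
    next
      case (2 i)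
      have "T (i, 0) \<le> T (b, 0)" using ssyt_hook_leg_less[OF TS, of i b] 2 by (cases "i = b") auto
      moreover have "T (b, 0) < Suc m" using ssyt_entry_less[OF TS hook_leg_cell[of b b a]] 2 by simp
      ultimately show ?thesis using T 2 by simp
    qed
    thus "T \<in> ?R" using TS unfolding ssyt_hook_iff by (auto simp: PiE_iff)
  qed
next
  show "?R \<subseteq> ?L"
  proof
    fix T assume T: "T \<in> ?R"
    have "T (0, a - 1) < m" using ssyt_entry_less[OF T hook_arm_cell[of "a - 1" a b]] assms by simp
    moreover have "1 \<le> b \<Longrightarrow> T (b, 0) < m" using ssyt_entry_less[OF T hook_leg_cell[of b b a]] by simp
    moreover have "T \<in> ssyt (hook a b) (Suc m)" using T unfolding ssyt_hook_iff by (auto simp: PiE_iff)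
    ultimately show "T \<in> ?L" by auto
  qed
qed

lemma ssyt_hook_fill_arm_end:
  assumes U: "U \<in> ssyt (hook (a - 1) b) (Suc m)" and a: "0 < a" "2 \<le> a \<or> b = 0"
  shows "U((0, a - 1) := m) \<in> ssyt (hook a b) (Suc m)"
proof -
  let ?T = "U((0, a - 1) := m)"
  have "?T \<in> cells (hook a b) \<rightarrow>\<^sub>E {..<Suc m}"
    unfolding cells_hook_insert_arm_end[OF a(1)] using U by (intro PiE_fun_upd) (auto simp: ssyt_def)
  moreover have "?T (0, j) \<le> ?T (0, Suc j)" if "Suc j < a" for j
  proof (cases "Suc j < a - 1")
    case True
    thus ?thesis using U unfolding ssyt_hook_iff by auto
  next
    case False
    with that have "Suc j = a - 1" by simp
    thus ?thesis using ssyt_entry_less[OF U hook_arm_cell[of j "a - 1" b]] by auto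
  qed
  moreover have "?T (i, 0) < ?T (Suc i, 0)" if "Suc i \<le> b" for i
    using U that a unfolding ssyt_hook_iff by auto
  ultimately show ?thesis unfolding ssyt_hook_iff by blast
qed

lemma ssyt_hook_clear_arm_end:
  assumes T: "T \<in> ssyt (hook a b) n" and a: "0 < a" "2 \<le> a \<or> b = 0"
  shows "T((0, a - 1) := undefined) \<in> ssyt (hook (a - 1) b) n"
proof -
  let ?U = "T((0, a - 1) := undefined)"
  have "?U \<in> cells (hook (a - 1) b) \<rightarrow>\<^sub>E {..<n}"
    using T cells_hook_insert_arm_end[OF a(1), of b] by (intro fun_upd_in_PiE) (auto simp: ssyt_def)
  moreover have "?U (0, j) \<le> ?U (0, Suc j)" if "Suc j < a - 1" for j
    using that T unfolding ssyt_hook_iff by auto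
  moreover have "?U (i, 0) < ?U (Suc i, 0)" if "Suc i \<le> b" for i
    using that T a unfolding ssyt_hook_iff by auto
  ultimately show ?thesis unfolding ssyt_hook_iff by blast
qed

lemma ssyt_hook_fill_leg_end:
  assumes U: "U \<in> ssyt (hook a (b - 1)) m" and a: "0 < a" and b: "1 \<le> b"
  shows "U((b, 0) := m) \<in> ssyt (hook a b) (Suc m)"
proof -
  let ?T = "U((b, 0) := m)"
  have "U \<in> cells (hook a (b - 1)) \<rightarrow>\<^sub>E {..<Suc m}"
    using U PiE_mono[of "cells (hook a (b - 1))" "\<lambda>_. {..<m}" "\<lambda>_. {..<Suc m}"]
    by (auto simp: ssyt_def)
  hence "?T \<in> cells (hook a b) \<rightarrow>\<^sub>E {..<Suc m}"
    unfolding cells_hook_insert_leg_end[OF b] by (intro PiE_fun_upd) auto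
  moreover have "?T (0, j) \<le> ?T (0, Suc j)" if "Suc j < a" for j
    using U that b unfolding ssyt_hook_iff by auto
  moreover have "?T (i, 0) < ?T (Suc i, 0)" if "Suc i \<le> b" for i
  proof (cases "Suc i \<le> b - 1")
    case True
    thus ?thesis using U unfolding ssyt_hook_iff by auto
  next
    case False
    with that have "Suc i = b" by simp
    moreover from this have "(i, 0) \<in> cells (hook a (b - 1))" using a by (auto simp: cells_hook)
    ultimately show ?thesis using ssyt_entry_less[OF U] by auto
  qed
  ultimately show ?thesis unfolding ssyt_hook_iff by blast
qed

lemma ssyt_hook_clear_leg_end:
  assumes T: "T \<in> ssyt (hook a b) (Suc m)" and a: "0 < a" and b: "1 \<le> b"
    and max: "T (0, a - 1) \<noteq> m" "T (b, 0) = m"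
  shows "T((b, 0) := undefined) \<in> ssyt (hook a (b - 1)) m"
proof -
  let ?U = "T((b, 0) := undefined)"
  have less: "T c < m" if "c \<in> cells (hook a (b - 1))" for c
    using that
  proof (cases rule: hook_cell_cases)
    case (1 j)
    have "T (0, j) \<le> T (0, a - 1)" using ssyt_hook_arm_le[OF T 1(2)] .
    moreover have "T (0, a - 1) < Suc m" using ssyt_entry_less[OF T hook_arm_cell[of "a - 1" a b]] a by simp
    ultimately show ?thesis using max 1 by simp
  next
    case (2 i)
    thus ?thesis using ssyt_hook_leg_less[OF T, of i b] max by simp
  qed
  have "?U \<in> cells (hook a (b - 1)) \<rightarrow>\<^sub>E {..<Suc m}"
    using T cells_hook_insert_leg_end[OF b, of a] by (intro fun_upd_in_PiE) (auto simp: ssyt_def)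
  hence "?U \<in> cells (hook a (b - 1)) \<rightarrow>\<^sub>E {..<m}"
    using less cells_hook_insert_leg_end[OF b, of a] by (auto simp: PiE_iff)
  moreover have "?U (0, j) \<le> ?U (0, Suc j)" if "Suc j < a" for j
    using that T b unfolding ssyt_hook_iff by auto
  moreover have "?U (i, 0) < ?U (Suc i, 0)" if "Suc i \<le> b - 1" for i
    using that T unfolding ssyt_hook_iff by auto
  ultimately show ?thesis unfolding ssyt_hook_iff by blast
qed

lemma ssyt_hook_max_at_arm_end:
  assumes "0 < a" "2 \<le> a \<or> b = 0"
  shows "{T \<in> ssyt (hook a b) (Suc m). T (0, a - 1) = m}
        = (\<lambda>U. U((0, a - 1) := m)) ` ssyt (hook (a - 1) b) (Suc m)"
proof (intro equalityI subsetI)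
  fix T assume T: "T \<in> {T \<in> ssyt (hook a b) (Suc m). T (0, a - 1) = m}"
  hence "T = (T((0, a - 1) := undefined))((0, a - 1) := m)" by auto
  moreover have "T((0, a - 1) := undefined) \<in> ssyt (hook (a - 1) b) (Suc m)"
    using ssyt_hook_clear_arm_end[OF _ assms] T by simp
  ultimately show "T \<in> (\<lambda>U. U((0, a - 1) := m)) ` ssyt (hook (a - 1) b) (Suc m)" by blast
qed (use ssyt_hook_fill_arm_end[OF _ assms] in auto)

lemma ssyt_hook_max_at_leg_end:
  assumes "1 \<le> b" "0 < a"
  shows "{T \<in> ssyt (hook a b) (Suc m). T (0, a - 1) \<noteq> m \<and> T (b, 0) = m}
        = (\<lambda>U. U((b, 0) := m)) ` ssyt (hook a (b - 1)) m"
proof (intro equalityI subsetI)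
  fix T assume T: "T \<in> {T \<in> ssyt (hook a b) (Suc m). T (0, a - 1) \<noteq> m \<and> T (b, 0) = m}"
  hence "T = (T((b, 0) := undefined))((b, 0) := m)" by auto
  moreover have "T((b, 0) := undefined) \<in> ssyt (hook a (b - 1)) m"
    using ssyt_hook_clear_leg_end[OF _ assms(2,1)] T by simp
  ultimately show "T \<in> (\<lambda>U. U((b, 0) := m)) ` ssyt (hook a (b - 1)) m" by blast
next
  fix T assume "T \<in> (\<lambda>U. U((b, 0) := m)) ` ssyt (hook a (b - 1)) m"
  then obtain U where U: "U \<in> ssyt (hook a (b - 1)) m" and T: "T = U((b, 0) := m)" by blast
  have "U (0, a - 1) < m" using ssyt_entry_less[OF U hook_arm_cell[of "a - 1" a "b - 1"]] assms by simp
  thus "T \<in> {T \<in> ssyt (hook a b) (Suc m). T (0, a - 1) \<noteq> m \<and> T (b, 0) = m}"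
    using ssyt_hook_fill_leg_end[OF U assms(2,1)] T assms by auto
qed

lemma ssyt_hook_max_at_corner:
  assumes "1 \<le> b"
  shows "{T \<in> ssyt (hook 1 b) (Suc m). T (0, 0) = m} = {}"
proof -
  have "T (0, 0) < m" if "T \<in> ssyt (hook 1 b) (Suc m)" for T
    using ssyt_hook_leg_less[OF that, of 0 1] ssyt_entry_less[OF that hook_leg_cell[of 1 b 1]] assms
    by simp
  thus ?thesis by auto
qed

lemma schur_empty_hook: "schur (hook 0 0) n x = 1"
proof -
  have "cells (hook 0 0) = {}" unfolding cells_hook by simp
  moreover from this have "ssyt (hook 0 0) n = {\<lambda>_. undefined}" unfolding ssyt_def by simp
  ultimately show ?thesis unfolding schur_def by simp
qed

lemma schur_hook_zero_vars:
  assumes "0 < a"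
  shows "schur (hook a b) 0 x = 0"
proof -
  have "ssyt (hook a b) 0 = {}"
    using ssyt_entry_less[OF _ hook_arm_cell[OF assms]] by blast
  thus ?thesis by (simp add: schur_def)
qed

lemma schur_hook_Suc:
  assumes "0 < a"
  shows "schur (hook a b) (Suc m) x = schur (hook a b) m x
     + (if 2 \<le> a then x m * schur (hook (a - 1) b) (Suc m) x else if b = 0 then x m else 0)
     + (if 1 \<le> b then x m * schur (hook a (b - 1)) m x else 0)"
proof -
  let ?S = "ssyt (hook a b) (Suc m)"
  let ?w = "tableau_monomial (hook a b) x"
  let ?A = "{T. T (0, a - 1) = m}"
  let ?B = "{T. 1 \<le> b \<and> T (b, 0) = m}"
  have fin: "finite ?S" by (rule finite_ssyt)
  have "schur (hook a b) (Suc m) x = sum ?w (?S \<inter> ?A) + sum ?w ((?S - ?A) \<inter> ?B) + sum ?w (?S - ?A - ?B)"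
    unfolding schur_eq_sum_tableau_monomial
    using sum.Int_Diff[OF fin, of ?w ?A] sum.Int_Diff[of "?S - ?A" ?w ?B] fin
    by (simp only: finite_Diff add.assoc)
  also have "?S - ?A - ?B = ssyt (hook a b) m"
    using ssyt_hook_avoiding_max[OF assms, of b m] by auto
  also have "sum ?w (?S \<inter> ?A) =
      (if 2 \<le> a then x m * schur (hook (a - 1) b) (Suc m) x else if b = 0 then x m else 0)"
  proof (cases "2 \<le> a \<or> b = 0")
    case True
    have "?S \<inter> ?A = (\<lambda>U. U((0, a - 1) := m)) ` ssyt (hook (a - 1) b) (Suc m)"
      using ssyt_hook_max_at_arm_end[OF assms True] by auto
    hence "sum ?w (?S \<inter> ?A) = x m * schur (hook (a - 1) b) (Suc m) x"
      using sum_tableau_monomial_fill_cell[OF cells_hook_insert_arm_end[OF assms, of b] order_refl]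
      by (simp add: schur_eq_sum_tableau_monomial)
    with True assms show ?thesis by (auto simp: schur_empty_hook)
  next
    case False
    with assms have "a = 1" "1 \<le> b" by auto
    hence "?S \<inter> ?A = {}" using ssyt_hook_max_at_corner[of b m] by auto
    with False show ?thesis by simp
  qed
  also have "sum ?w ((?S - ?A) \<inter> ?B) = (if 1 \<le> b then x m * schur (hook a (b - 1)) m x else 0)"
  proof (cases "1 \<le> b")
    case True
    have "(?S - ?A) \<inter> ?B = (\<lambda>U. U((b, 0) := m)) ` ssyt (hook a (b - 1)) m"
      using ssyt_hook_max_at_leg_end[OF True assms] True by auto
    with True show ?thesis
      using sum_tableau_monomial_fill_cell[OF cells_hook_insert_leg_end[OF True, of a] order_refl]
      by (simp add: schur_eq_sum_tableau_monomial)
  qed auto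
  finally show ?thesis by (simp add: schur_eq_sum_tableau_monomial)
qed

section \<open>Power sums as alternating sums of hooks\<close>

lemma alternating_hook_sum_Suc:
  assumes "1 \<le> k"
  shows "(\<Sum>r<Suc k. (-1) ^ r * schur (hook (Suc k - r) r) (Suc n) x)
       = (\<Sum>r<Suc k. (-1) ^ r * schur (hook (Suc k - r) r) n x)
         + x n * ((\<Sum>r<k. (-1) ^ r * schur (hook (k - r) r) (Suc n) x)
                  - (\<Sum>r<k. (-1) ^ r * schur (hook (k - r) r) n x))"
proof -
  let ?S = "\<lambda>a b m. schur (hook a b) m x"
  have "(\<Sum>r<Suc k. (-1) ^ r * ?S (Suc k - r) r (Suc n))
     = (\<Sum>r<Suc k. (-1) ^ r * ?S (Suc k - r) r n)
     + (\<Sum>r<Suc k. if r < k then x n * ((-1) ^ r * ?S (k - r) r (Suc n)) else 0)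
     + (\<Sum>r<Suc k. if 1 \<le> r then (-1) ^ r * (x n * ?S (Suc k - r) (r - 1) n) else 0)"
    unfolding sum.distrib[symmetric]
  proof (rule sum.cong[OF refl])
    fix r assume "r \<in> {..<Suc k}"
    hence "0 < Suc k - r" "Suc k - r - 1 = k - r" "2 \<le> Suc k - r \<longleftrightarrow> r < k" by auto
    with assms show "(-1) ^ r * ?S (Suc k - r) r (Suc n) = (-1) ^ r * ?S (Suc k - r) r n
      + (if r < k then x n * ((-1) ^ r * ?S (k - r) r (Suc n)) else 0)
      + (if 1 \<le> r then (-1) ^ r * (x n * ?S (Suc k - r) (r - 1) n) else 0)"
      by (auto simp: schur_hook_Suc algebra_simps)
  qed
  also have "(\<Sum>r<Suc k. if r < k then x n * ((-1) ^ r * ?S (k - r) r (Suc n)) else 0)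
      = x n * (\<Sum>r<k. (-1) ^ r * ?S (k - r) r (Suc n))"
    by (simp add: sum_distrib_left)
  also have "(\<Sum>r<Suc k. if 1 \<le> r then (-1) ^ r * (x n * ?S (Suc k - r) (r - 1) n) else 0)
      = - x n * (\<Sum>r<k. (-1) ^ r * ?S (k - r) r n)"
    by (subst sum.lessThan_Suc_shift) (simp add: sum_distrib_left mult.left_commute)
  finally show ?thesis by (simp add: algebra_simps)
qed

text \<open>The Murnaghan--Nakayama rule for a single cycle: the only shapes with a nonzero
  character value at a \<open>k\<close>-cycle are the hooks, with value \<open>(-1)\<^sup>r\<close> on \<open>(k - r, 1\<^sup>r)\<close>.\<close>
lemma power_sum_eq_alternating_hook_sum:
  "1 \<le> k \<Longrightarrow> (\<Sum>i<n. x i ^ k) = (\<Sum>r<k. (-1) ^ r * schur (hook (k - r) r) n x)"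
proof (induction n arbitrary: k)
  case 0
  thus ?case by (simp add: schur_hook_zero_vars)
next
  case (Suc n)
  note IH = Suc.IH
  show ?case using \<open>1 \<le> k\<close>
  proof (induction k rule: nat_induct_at_least)
    case base
    show ?case using schur_hook_Suc[of 1 0 n x] IH[of 1] by simp
  next
    case (Suc k)
    let ?A = "\<lambda>m. \<Sum>r<k. (-1) ^ r * schur (hook (k - r) r) m x"
    let ?B = "\<lambda>m. \<Sum>r<Suc k. (-1) ^ r * schur (hook (Suc k - r) r) m x"
    have "?B (Suc n) = ?B n + x n * (?A (Suc n) - ?A n)"
      by (rule alternating_hook_sum_Suc[OF Suc.hyps])
    also have "?A (Suc n) - ?A n = x n ^ k" using Suc.IH IH[OF Suc.hyps] by simp
    also have "?B n = (\<Sum>i<n. x i ^ Suc k)" using IH[of "Suc k"] Suc.hyps by simp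
    finally show ?case by simp
  qed
qed

section \<open>Linear independence of Schur polynomials\<close>

lemma length_le_sum_list_of_pos: "(\<forall>x\<in>set xs. 0 < x) \<Longrightarrow> length xs \<le> sum_list (xs :: nat list)"
  by (induction xs) auto

lemma partition_length_le: "is_partition k lam \<Longrightarrow> length lam \<le> k"
  unfolding is_partition_def using length_le_sum_list_of_pos by auto

lemma finite_partitions: "finite (partitions k)"
proof -
  have "partitions k \<subseteq> {xs. set xs \<subseteq> {..k} \<and> length xs \<le> k}"
    unfolding partitions_def using partition_length_le
    by (auto simp: is_partition_def dest: member_le_sum_list)
  thus ?thesis by (rule finite_subset) (rule finite_lists_length_le, simp)
qed

lemma partition_cell_above:
  assumes "is_partition k lam" "(Suc i, j) \<in> cells lam"
  shows "(i, j) \<in> cells lam"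
proof -
  have "Suc i < length lam" "j < lam ! Suc i" using assms(2) unfolding cells_def by auto
  moreover have "lam ! Suc i \<le> lam ! i"
    using assms(1) calculation sorted_wrt_nth_less[of "(\<ge>)" lam i "Suc i"]
    unfolding is_partition_def by simp
  ultimately show ?thesis unfolding cells_def by auto
qed

lemma ssyt_row_le_entry:
  assumes "is_partition k lam" "T \<in> ssyt lam n" "(i, j) \<in> cells lam"
  shows "i \<le> T (i, j)"
  using assms(3)
proof (induction i)
  case (Suc i)
  have "(i, j) \<in> cells lam" using partition_cell_above[OF assms(1) Suc.prems] .
  moreover have "T (i, j) < T (Suc i, j)" using assms(2) Suc.prems unfolding ssyt_def by auto
  ultimately show ?case using Suc.IH by simp
qed simp

definition row_tableau :: "nat list \<Rightarrow> nat \<times> nat \<Rightarrow> nat" where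
  "row_tableau lam = restrict fst (cells lam)"

lemma row_tableau_in_ssyt:
  assumes "is_partition k lam" "k \<le> n"
  shows "row_tableau lam \<in> ssyt lam n"
proof -
  have "row_tableau lam \<in> cells lam \<rightarrow>\<^sub>E {..<n}"
    using partition_length_le[OF assms(1)] assms(2)
    unfolding row_tableau_def cells_def by auto
  moreover have "row_tableau lam (i, j) \<le> row_tableau lam (i, Suc j)" if "(i, Suc j) \<in> cells lam" for i j
    using that unfolding row_tableau_def cells_def by simp
  moreover have "row_tableau lam (i, j) < row_tableau lam (Suc i, j)" if "(Suc i, j) \<in> cells lam" for i j
    using partition_cell_above[OF assms(1) that] that unfolding row_tableau_def by simp
  ultimately show ?thesis unfolding ssyt_def by blast
qed

text \<open>Specialising the letter \<open>i\<close> to \<open>t ^ letter_weight k i\<close> turns \<open>s\<^sub>\<lambda>\<close> into a sum of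
  powers \<open>t ^ tableau_weight k \<lambda> T\<close>; for \<open>|\<lambda>| = k\<close> the top exponent is attained only by
  \<open>row_tableau \<lambda>\<close>, and it encodes the parts of \<open>\<lambda>\<close> as base-\<open>(k + 1)\<close> digits.\<close>
definition letter_weight :: "nat \<Rightarrow> nat \<Rightarrow> nat" where
  "letter_weight k i = (k + 1) ^ (k - 1 - i)"

definition tableau_weight :: "nat \<Rightarrow> nat list \<Rightarrow> (nat \<times> nat \<Rightarrow> nat) \<Rightarrow> nat" where
  "tableau_weight k lam T = (\<Sum>c\<in>cells lam. letter_weight k (T c))"

lemma tableau_weight_le_row_tableau:
  assumes "is_partition k lam" "T \<in> ssyt lam k"
  shows "tableau_weight k lam T \<le> tableau_weight k lam (row_tableau lam)"
    and "T \<noteq> row_tableau lam \<Longrightarrow> tableau_weight k lam T < tableau_weight k lam (row_tableau lam)"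
proof -
  have le: "letter_weight k (T c) \<le> letter_weight k (row_tableau lam c)" if "c \<in> cells lam" for c
  proof -
    obtain i j where c: "c = (i, j)" by (cases c)
    with that have "i \<le> T c" using ssyt_row_le_entry[OF assms] by simp
    with that c show ?thesis unfolding row_tableau_def letter_weight_def by (auto intro!: power_increasing)
  qed
  thus "tableau_weight k lam T \<le> tableau_weight k lam (row_tableau lam)"
    unfolding tableau_weight_def by (intro sum_mono) auto
  assume "T \<noteq> row_tableau lam"
  then obtain c where "T c \<noteq> row_tableau lam c" by (meson ext)
  moreover from this have "c \<in> cells lam"
    using ssyt_undefined[OF assms(2), of c] unfolding row_tableau_def by (auto split: if_splits)
  ultimately have c: "c \<in> cells lam" "T c \<noteq> row_tableau lam c" by auto
  obtain i j where cij: "c = (i, j)" by (cases c)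
  have "i < T (i, j)" "T (i, j) < k"
    using ssyt_row_le_entry[OF assms, of i j] ssyt_entry_less[OF assms(2)] c cij
    unfolding row_tableau_def by auto
  hence "letter_weight k (T c) < letter_weight k (row_tableau lam c)"
    using c cij unfolding row_tableau_def letter_weight_def by (auto intro: power_strict_increasing)
  thus "tableau_weight k lam T < tableau_weight k lam (row_tableau lam)"
    unfolding tableau_weight_def by (intro sum_strict_mono_ex1) (use le c finite_cells in auto)
qed

definition part :: "nat list \<Rightarrow> nat \<Rightarrow> nat" where
  "part lam i = (if i < length lam then lam ! i else 0)"

lemma tableau_weight_row_tableau:
  assumes "is_partition k lam"
  shows "tableau_weight k lam (row_tableau lam) = (\<Sum>i<k. part lam i * (k + 1) ^ (k - 1 - i))"
proof -
  have cells: "cells lam = (SIGMA i:{..<length lam}. {..<lam ! i})" unfolding cells_def by auto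
  have "tableau_weight k lam (row_tableau lam) = (\<Sum>c\<in>cells lam. letter_weight k (fst c))"
    unfolding tableau_weight_def row_tableau_def by (rule sum.cong) auto
  also have "\<dots> = (\<Sum>i<length lam. \<Sum>j<lam ! i. letter_weight k i)"
    unfolding cells by (subst sum.Sigma) (auto simp: split_def)
  also have "\<dots> = (\<Sum>i<k. part lam i * letter_weight k i)"
    using partition_length_le[OF assms]
    by (intro sum.mono_neutral_cong_left) (auto simp: part_def)
  finally show ?thesis unfolding letter_weight_def .
qed

lemma base_digits_less:
  "(\<And>i. i < K \<Longrightarrow> p i < B) \<Longrightarrow> (\<Sum>i<K. p i * B ^ (K - 1 - i)) < (B :: nat) ^ K"
proof (induction K arbitrary: p)
  case (Suc K)
  have "(\<Sum>i<Suc K. p i * B ^ (Suc K - 1 - i)) = p 0 * B ^ K + (\<Sum>i<K. p (Suc i) * B ^ (K - 1 - i))"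
    by (subst sum.lessThan_Suc_shift) simp
  also have "\<dots> < p 0 * B ^ K + B ^ K" using Suc.IH[of "\<lambda>i. p (Suc i)"] Suc.prems by simp
  also have "\<dots> = (p 0 + 1) * B ^ K" by simp
  also have "\<dots> \<le> B * B ^ K" using Suc.prems[of 0] by (intro mult_right_mono) auto
  finally show ?case by simp
qed simp

lemma base_digits_inj:
  assumes "\<And>i. i < K \<Longrightarrow> p i < B" "\<And>i. i < K \<Longrightarrow> q i < B"
    and "(\<Sum>i<K. p i * B ^ (K - 1 - i)) = (\<Sum>i<K. q i * (B :: nat) ^ (K - 1 - i))" "i < K"
  shows "p i = q i"
  using assms
proof (induction K arbitrary: p q i)
  case (Suc K)
  define x where "x = (\<Sum>i<K. p (Suc i) * B ^ (K - 1 - i))"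
  define y where "y = (\<Sum>i<K. q (Suc i) * B ^ (K - 1 - i))"
  have "x < B ^ K" "y < B ^ K"
    using base_digits_less[of K "\<lambda>i. p (Suc i)" B] base_digits_less[of K "\<lambda>i. q (Suc i)" B] Suc.prems
    unfolding x_def y_def by auto
  moreover have "(\<Sum>i<Suc K. p i * B ^ (Suc K - 1 - i)) = x + p 0 * B ^ K"
    "(\<Sum>i<Suc K. q i * B ^ (Suc K - 1 - i)) = y + q 0 * B ^ K"
    unfolding x_def y_def by (subst sum.lessThan_Suc_shift, simp)+
  hence "x + p 0 * B ^ K = y + q 0 * B ^ K" using Suc.prems(3) by simp
  ultimately have "(x + p 0 * B ^ K) div B ^ K = (y + q 0 * B ^ K) div B ^ K"
    "(x + p 0 * B ^ K) mod B ^ K = (y + q 0 * B ^ K) mod B ^ K"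
    and less: "x < B ^ K" "y < B ^ K" by simp_all
  moreover from less have "B ^ K \<noteq> 0" by (metis not_less0 gr_zeroI)
  ultimately have "p 0 = q 0" "x = y" using less by simp_all
  show ?case
  proof (cases i)
    case (Suc i')
    with \<open>x = y\<close> Suc.prems show ?thesis
      using Suc.IH[of "\<lambda>i. p (Suc i)" "\<lambda>i. q (Suc i)" i'] unfolding x_def y_def by simp
  qed (simp add: \<open>p 0 = q 0\<close>)
qed simp

lemma partition_eqI_part:
  assumes "is_partition k lam" "is_partition k mu" "\<And>i. i < k \<Longrightarrow> part lam i = part mu i"
  shows "lam = mu"
proof -
  have pos: "\<forall>x\<in>set lam. 0 < x" "\<forall>x\<in>set mu. 0 < x" using assms(1,2) unfolding is_partition_def by auto
  have len: "length lam \<le> k" "length mu \<le> k" using partition_length_le assms(1,2) by auto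
  have "length lam = length mu"
  proof (rule ccontr)
    assume "length lam \<noteq> length mu"
    then consider "length lam < length mu" | "length mu < length lam" by linarith
    thus False
      using assms(3)[of "length lam"] assms(3)[of "length mu"] pos len
      by cases (auto simp: part_def dest!: nth_mem)
  qed
  thus ?thesis
  proof (rule nth_equalityI)
    fix i assume "i < length lam"
    thus "lam ! i = mu ! i" using assms(3)[of i] len \<open>length lam = length mu\<close> by (simp add: part_def)
  qed
qed

lemma row_tableau_weight_inj:
  assumes "is_partition k lam" "is_partition k mu"
    and "tableau_weight k lam (row_tableau lam) = tableau_weight k mu (row_tableau mu)"
  shows "lam = mu"
proof (rule partition_eqI_part[OF assms(1,2)])
  have digit: "part nu i < k + 1" if "is_partition k nu" for nu i
    using that elem_le_sum_list[of i nu] unfolding part_def is_partition_def by auto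
  fix i assume "i < k"
  thus "part lam i = part mu i"
    using base_digits_inj[of k "part lam" "k + 1" "part mu" i] digit[OF assms(1)] digit[OF assms(2)] assms(3)
    unfolding tableau_weight_row_tableau[OF assms(1)] tableau_weight_row_tableau[OF assms(2)] by blast
qed

lemma tendsto_sum_power_ratio:
  assumes "finite A" "\<And>a. a \<in> A \<Longrightarrow> w a \<le> E"
  shows "((\<lambda>t :: real. \<Sum>a\<in>A. t ^ w a / t ^ E) \<longlongrightarrow> real (card (A \<inter> {a. w a = E}))) at_top"
proof -
  have "((\<lambda>t :: real. t ^ w a / t ^ E) \<longlongrightarrow> of_bool (w a = E)) at_top" if "a \<in> A" for a
  proof -
    have "eventually (\<lambda>t :: real. inverse t ^ (E - w a) = t ^ w a / t ^ E) at_top"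
      using eventually_gt_at_top[of "0 :: real"]
    proof (rule eventually_mono)
      fix t :: real assume "0 < t"
      moreover have "t ^ E = t ^ w a * t ^ (E - w a)" using assms(2)[OF that] by (simp flip: power_add)
      ultimately show "inverse t ^ (E - w a) = t ^ w a / t ^ E" by (simp add: power_inverse field_simps)
    qed
    moreover have "((\<lambda>t :: real. inverse t ^ (E - w a)) \<longlongrightarrow> 0 ^ (E - w a)) at_top"
      by (intro tendsto_power tendsto_inverse_0_at_top filterlim_ident)
    moreover have "(0 :: real) ^ (E - w a) = of_bool (w a = E)" using assms(2)[OF that] by auto
    ultimately show ?thesis using tendsto_cong by fastforce
  qed
  hence "((\<lambda>t :: real. \<Sum>a\<in>A. t ^ w a / t ^ E) \<longlongrightarrow> (\<Sum>a\<in>A. of_bool (w a = E))) at_top"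
    by (rule tendsto_sum)
  thus ?thesis using assms(1) by simp
qed

lemma tendsto_ssyt_weight_ratio:
  assumes mu: "is_partition k mu" and nu: "is_partition k nu"
    and le: "tableau_weight k mu (row_tableau mu) \<le> tableau_weight k nu (row_tableau nu)"
  defines "E \<equiv> tableau_weight k nu (row_tableau nu)"
  shows "((\<lambda>t :: real. \<Sum>T\<in>ssyt mu k. t ^ tableau_weight k mu T / t ^ E) \<longlongrightarrow> of_bool (mu = nu)) at_top"
proof -
  have "ssyt mu k \<inter> {T. tableau_weight k mu T = E} = (if mu = nu then {row_tableau nu} else {})"
  proof (intro equalityI subsetI)
    fix T assume T: "T \<in> ssyt mu k \<inter> {T. tableau_weight k mu T = E}"
    hence "T = row_tableau mu"
      using tableau_weight_le_row_tableau(2)[OF mu] le unfolding E_def by fastforce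
    moreover from this have "mu = nu"
      using row_tableau_weight_inj[OF mu nu] T unfolding E_def by auto
    ultimately show "T \<in> (if mu = nu then {row_tableau nu} else {})" by simp
  qed (use row_tableau_in_ssyt[OF nu order_refl] E_def in \<open>auto split: if_splits\<close>)
  hence "card (ssyt mu k \<inter> {T. tableau_weight k mu T = E}) = of_bool (mu = nu)" by simp
  moreover have "((\<lambda>t :: real. \<Sum>T\<in>ssyt mu k. t ^ tableau_weight k mu T / t ^ E)
      \<longlongrightarrow> real (card (ssyt mu k \<inter> {T. tableau_weight k mu T = E}))) at_top"
    using tableau_weight_le_row_tableau(1)[OF mu] le unfolding E_def
    by (intro tendsto_sum_power_ratio finite_ssyt) (meson order_trans)
  ultimately show ?thesis by simp
qed

lemma schur_linear_independent:
  assumes out: "\<forall>mu. mu \<notin> partitions k \<longrightarrow> d mu = 0"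
    and zero: "\<forall>n x. (\<Sum>mu\<in>partitions k. d mu * schur mu n x) = 0"
  shows "d lam = (0 :: real)"
proof (rule ccontr)
  assume "d lam \<noteq> 0"
  define S where "S = {mu \<in> partitions k. d mu \<noteq> 0}"
  let ?W = "\<lambda>mu. tableau_weight k mu (row_tableau mu)"
  have "finite S" unfolding S_def using finite_partitions by simp
  moreover have "lam \<in> S" using \<open>d lam \<noteq> 0\<close> out unfolding S_def by auto
  ultimately have "Max (?W ` S) \<in> ?W ` S" by (intro Max_in) auto
  then obtain nu where nu: "nu \<in> S" "?W nu = Max (?W ` S)" by auto
  have max: "?W mu \<le> ?W nu" if "mu \<in> S" for mu
    unfolding nu(2) using \<open>finite S\<close> that by (intro Max_ge) auto
  let ?f = "\<lambda>mu t. d mu * (\<Sum>T\<in>ssyt mu k. t ^ tableau_weight k mu T / t ^ ?W nu)"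
  have "(?f mu \<longlongrightarrow> d mu * of_bool (mu = nu)) at_top" if "mu \<in> partitions k" for mu
  proof (cases "mu \<in> S")
    case True
    thus ?thesis using nu(1) max[OF True]
      by (intro tendsto_mult_left tendsto_ssyt_weight_ratio) (auto simp: S_def partitions_def)
  qed (use that nu(1) in \<open>auto simp: S_def\<close>)
  hence "((\<lambda>t. \<Sum>mu\<in>partitions k. ?f mu t) \<longlongrightarrow> (\<Sum>mu\<in>partitions k. d mu * of_bool (mu = nu))) at_top"
    by (rule tendsto_sum)
  moreover have "(\<Sum>mu\<in>partitions k. d mu * of_bool (mu = nu)) = d nu"
    using nu(1) finite_partitions unfolding S_def by simp
  moreover have "(\<Sum>mu\<in>partitions k. ?f mu t) = 0" for t :: real
  proof -
    have "schur mu k (\<lambda>i. t ^ letter_weight k i) = (\<Sum>T\<in>ssyt mu k. t ^ tableau_weight k mu T)" for mu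
      unfolding schur_def tableau_weight_def by (simp add: power_sum)
    hence "(\<Sum>mu\<in>partitions k. ?f mu t)
        = (\<Sum>mu\<in>partitions k. d mu * schur mu k (\<lambda>i. t ^ letter_weight k i)) / t ^ ?W nu"
      by (simp add: sum_divide_distrib[symmetric] times_divide_eq_right)
    thus ?thesis using zero by simp
  qed
  ultimately have "d nu = 0" by (simp add: tendsto_const_iff)
  thus False using nu(1) unfolding S_def by simp
qed

definition cycle_character :: "nat \<Rightarrow> nat list \<Rightarrow> real" where
  "cycle_character k lam = (\<Sum>r<k. if lam = hook (k - r) r then (-1) ^ r else 0)"

lemma hook_in_partitions: "r < k \<Longrightarrow> hook (k - r) r \<in> partitions k"
proof -
  have "sorted_wrt (\<ge>) (replicate r (1 :: nat))" by (induction r) auto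
  thus "r < k \<Longrightarrow> ?thesis"
    unfolding partitions_def is_partition_def hook_def by (auto simp: sum_list_replicate)
qed

lemma sum_cycle_character:
  "(\<Sum>lam\<in>partitions k. cycle_character k lam * f lam) = (\<Sum>r<k. (-1) ^ r * f (hook (k - r) r))"
proof -
  have "(\<Sum>lam\<in>partitions k. cycle_character k lam * f lam)
      = (\<Sum>r<k. \<Sum>lam\<in>partitions k. if lam = hook (k - r) r then (-1) ^ r * f lam else 0)"
    unfolding cycle_character_def sum_distrib_right by (subst sum.swap) (intro sum.cong; simp)
  also have "\<dots> = (\<Sum>r<k. (-1) ^ r * f (hook (k - r) r))"
    using hook_in_partitions finite_partitions by (intro sum.cong) (auto simp: sum.delta')
  finally show ?thesis .
qed

lemma chi_cycle_eq_cycle_character: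
  assumes "1 \<le> k"
  shows "chi_cycle k = cycle_character k"
proof -
  have out: "\<forall>lam. lam \<notin> partitions k \<longrightarrow> cycle_character k lam = 0"
    unfolding cycle_character_def using hook_in_partitions by (auto intro!: sum.neutral)
  have expansion: "\<forall>n (x :: nat \<Rightarrow> real).
      (\<Sum>i<n. x i ^ k) = (\<Sum>lam\<in>partitions k. cycle_character k lam * schur lam n x)"
    using power_sum_eq_alternating_hook_sum[OF assms] by (simp add: sum_cycle_character)
  show ?thesis
    unfolding chi_cycle_def
  proof (rule the_equality)
    fix c assume c: "(\<forall>lam. lam \<notin> partitions k \<longrightarrow> c lam = 0) \<and>
      (\<forall>n (x :: nat \<Rightarrow> real). (\<Sum>i<n. x i ^ k) = (\<Sum>lam\<in>partitions k. c lam * schur lam n x))"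
    have "c lam - cycle_character k lam = 0" for lam
      by (rule schur_linear_independent[where k = k and d = "\<lambda>lam. c lam - cycle_character k lam"])
        (use c out expansion in \<open>simp_all add: left_diff_distrib sum_subtractf\<close>)
    thus "c = cycle_character k" by auto
  qed (use out expansion in blast)
qed

section \<open>Principal specialisation of hooks\<close>

definition qprod :: "real \<Rightarrow> nat \<Rightarrow> nat \<Rightarrow> real" where
  "qprod Q s t = (\<Prod>j\<in>{s..<t}. 1 - Q ^ j)"

lemma qprod_empty: "t \<le> s \<Longrightarrow> qprod Q s t = 1"
  unfolding qprod_def by simp

lemma qprod_Suc_right: "s \<le> t \<Longrightarrow> qprod Q s (Suc t) = qprod Q s t * (1 - Q ^ t)"
  unfolding qprod_def by (simp add: prod.atLeastLessThan_Suc)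

lemma qprod_Suc_left: "s < t \<Longrightarrow> qprod Q s t = (1 - Q ^ s) * qprod Q (Suc s) t"
  unfolding qprod_def by (simp add: prod.atLeast_Suc_lessThan)

lemma qprod_from_0: "0 < t \<Longrightarrow> qprod Q 0 t = 0"
  using qprod_Suc_left[of 0 t Q] by simp

lemma qprod_concat: "s \<le> t \<Longrightarrow> t \<le> u \<Longrightarrow> qprod Q s t * qprod Q t u = qprod Q s u"
  unfolding qprod_def by (rule prod.atLeastLessThan_concat)

lemma qprod_shift: "qprod Q s (s + n) = (\<Prod>i<n. 1 - Q ^ (s + i))"
  by (induction n) (simp_all add: qprod_empty qprod_Suc_right)

lemma qpoch_Suc: "qpoch a p (Suc r) = qpoch a p r * (1 - a * p ^ r)"
  unfolding qpoch_def by simp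

lemma qpoch_eq_qprod: "qpoch (Q ^ s) Q n = qprod Q s (s + n)"
  unfolding qpoch_def qprod_shift by (simp add: power_add)

lemma qprod_pos: "0 < Q \<Longrightarrow> Q < 1 \<Longrightarrow> 0 < s \<Longrightarrow> 0 < qprod Q s t"
  unfolding qprod_def by (intro prod_pos) (auto simp: power_less_one_iff)

text \<open>\<open>hook_limit Q a b\<close> is \<open>s\<^bsub>(a, 1\<^sup>b)\<^esub>(1, Q, Q\<^sup>2, \<dots>)\<close>, and \<open>hook_pspec Q a b m\<close> is its
  specialisation to \<open>m\<close> variables.  For \<open>m \<le> b\<close> the truncated subtraction makes the
  second factor start at \<open>1 - Q\<^sup>0 = 0\<close>, as it should: a hook with \<open>b + 1\<close> rows has no
  semistandard tableau in \<open>m\<close> letters.\<close>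
definition hook_limit :: "real \<Rightarrow> nat \<Rightarrow> nat \<Rightarrow> real" where
  "hook_limit Q a b = Q ^ (b * (b + 1) div 2) / ((1 - Q ^ (a + b)) * qprod Q 1 a * qprod Q 1 (Suc b))"

definition hook_pspec :: "real \<Rightarrow> nat \<Rightarrow> nat \<Rightarrow> nat \<Rightarrow> real" where
  "hook_pspec Q a b m = hook_limit Q a b * qprod Q (m - b) (m + a)"

lemma power_neq_one: "0 < Q \<Longrightarrow> Q < 1 \<Longrightarrow> 0 < n \<Longrightarrow> Q ^ n \<noteq> (1 :: real)"
  using power_less_one_iff[of Q n] by simp

lemma triangular_Suc: "Suc r * (Suc r + 1) div 2 = r * (r + 1) div 2 + Suc r"
proof -
  have "Suc r * (Suc r + 1) = r * (r + 1) + 2 * Suc r" by (simp add: algebra_simps)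
  thus ?thesis by presburger
qed

lemma hook_limit_arm_step:
  assumes Q: "0 < Q" "Q < 1" and a: "2 \<le> a"
  shows "hook_limit Q (a - 1) b * (1 - Q ^ (a - 1 + b)) = hook_limit Q a b * (1 - Q ^ (a + b)) * (1 - Q ^ (a - 1))"
proof -
  define P where "P = qprod Q 1 (a - 1) * qprod Q 1 (Suc b)"
  define T where "T = Q ^ (b * (b + 1) div 2)"
  have "qprod Q 1 a = qprod Q 1 (a - 1) * (1 - Q ^ (a - 1))"
    using qprod_Suc_right[of 1 "a - 1" Q] a by simp
  hence lim: "hook_limit Q (a - 1) b = T / ((1 - Q ^ (a - 1 + b)) * P)"
    "hook_limit Q a b = T / ((1 - Q ^ (a + b)) * (1 - Q ^ (a - 1)) * P)"
    unfolding hook_limit_def P_def T_def by (simp_all add: ac_simps)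
  have "P \<noteq> 0" unfolding P_def using qprod_pos[OF Q, of 1] by (simp add: less_imp_neq[symmetric])
  moreover have "1 - Q ^ (a - 1 + b) \<noteq> 0" "1 - Q ^ (a + b) \<noteq> 0" "1 - Q ^ (a - 1) \<noteq> 0"
    using a by (simp_all add: power_neq_one[OF Q])
  ultimately show ?thesis unfolding lim by simp
qed

lemma hook_limit_leg_step:
  assumes Q: "0 < Q" "Q < 1" and a: "0 < a" and b: "1 \<le> b"
  shows "Q ^ b * (hook_limit Q a (b - 1) * (1 - Q ^ (a + (b - 1))))
       = hook_limit Q a b * (1 - Q ^ (a + b)) * (1 - Q ^ b)"
proof -
  define P where "P = qprod Q 1 a * qprod Q 1 b"
  define T where "T = Q ^ ((b - 1) * (b - 1 + 1) div 2)"
  have "b * (b + 1) div 2 = (b - 1) * (b - 1 + 1) div 2 + b"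
    using triangular_Suc[of "b - 1"] b by simp
  moreover have "qprod Q 1 (Suc b) = qprod Q 1 b * (1 - Q ^ b)"
    using qprod_Suc_right[of 1 b Q] b by simp
  ultimately have lim: "hook_limit Q a (b - 1) = T / ((1 - Q ^ (a + (b - 1))) * P)"
    "hook_limit Q a b = T * Q ^ b / ((1 - Q ^ (a + b)) * (1 - Q ^ b) * P)"
    unfolding hook_limit_def P_def T_def using b by (simp_all add: power_add ac_simps)
  have "P \<noteq> 0" unfolding P_def using qprod_pos[OF Q, of 1] by (simp add: less_imp_neq[symmetric])
  moreover have "1 - Q ^ (a + (b - 1)) \<noteq> 0" "1 - Q ^ (a + b) \<noteq> 0" "1 - Q ^ b \<noteq> 0"
    using a b by (simp_all add: power_neq_one[OF Q])
  ultimately show ?thesis unfolding lim by simp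
qed

lemma hook_limit_recursion:
  assumes Q: "0 < Q" "Q < 1" and a: "0 < a"
  shows "hook_limit Q a b * (1 - Q ^ (a + b)) = Q ^ b *
     ((if 2 \<le> a then hook_limit Q (a - 1) b else 0) + (if 1 \<le> b then hook_limit Q a (b - 1) else 0)
      + (if a = 1 \<and> b = 0 then 1 else 0))"
proof (cases "2 \<le> a"; cases "1 \<le> b")
  assume a2: "2 \<le> a" and b1: "1 \<le> b"
  define X where "X = hook_limit Q a b * (1 - Q ^ (a + b))"
  define c where "c = 1 - Q ^ (a - 1 + b)"
  have "a + (b - 1) = a - 1 + b" using a2 b1 by simp
  note leg = hook_limit_leg_step[OF Q a b1, unfolded this, folded c_def X_def]
  note arm = hook_limit_arm_step[OF Q a2, of b, folded c_def X_def]
  have "c \<noteq> 0" unfolding c_def using power_neq_one[OF Q, of "a - 1 + b"] a2 by simp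
  have "Q ^ b * (hook_limit Q (a - 1) b + hook_limit Q a (b - 1)) * c
      = Q ^ b * (hook_limit Q (a - 1) b * c) + Q ^ b * (hook_limit Q a (b - 1) * c)"
    by (simp add: algebra_simps)
  also have "\<dots> = X * (Q ^ b * (1 - Q ^ (a - 1)) + (1 - Q ^ b))"
    unfolding arm leg by (simp add: algebra_simps)
  also have "Q ^ b * (1 - Q ^ (a - 1)) + (1 - Q ^ b) = c"
    unfolding c_def using a2 by (simp add: algebra_simps flip: power_add)
  finally show ?thesis using a2 b1 \<open>c \<noteq> 0\<close> unfolding X_def by simp
next
  assume a2: "2 \<le> a" and "\<not> 1 \<le> b"
  hence "b = 0" by simp
  moreover have "hook_limit Q (a - 1) 0 = hook_limit Q a 0 * (1 - Q ^ a)"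
    using hook_limit_arm_step[OF Q a2, of 0] power_neq_one[OF Q, of "a - 1"] a2 by simp
  ultimately show ?thesis using a2 by simp
next
  assume "\<not> 2 \<le> a" and b1: "1 \<le> b"
  with a have "a = 1" by simp
  moreover have "1 + (b - 1) = b" using b1 by simp
  hence "Q ^ b * hook_limit Q 1 (b - 1) = hook_limit Q 1 b * (1 - Q ^ (1 + b))"
    using hook_limit_leg_step[OF Q _ b1, of 1] power_neq_one[OF Q, of b] b1 by simp
  ultimately show ?thesis using b1 by simp
next
  assume "\<not> 2 \<le> a" and "\<not> 1 \<le> b"
  with a have "a = 1" "b = 0" by auto
  thus ?thesis using power_neq_one[OF Q, of 1] by (simp add: hook_limit_def qprod_empty)
qed

lemma hook_pspec_eq_0: "m \<le> b \<Longrightarrow> 0 < m + a \<Longrightarrow> hook_pspec Q a b m = 0"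
  unfolding hook_pspec_def by (simp add: qprod_from_0)

lemma hook_pspec_Suc:
  assumes Q: "0 < Q" "Q < 1" and a: "0 < a"
  shows "hook_pspec Q a b (Suc m) = hook_pspec Q a b m
     + (if 2 \<le> a then Q ^ m * hook_pspec Q (a - 1) b (Suc m) else if b = 0 then Q ^ m else 0)
     + (if 1 \<le> b then Q ^ m * hook_pspec Q a (b - 1) m else 0)"
proof (cases "m < b")
  case True
  thus ?thesis using a by (auto simp: hook_pspec_eq_0)
next
  case False
  define d where "d = m - b"
  have m: "m = d + b" unfolding d_def using False by simp
  define P where "P = qprod Q (Suc d) (m + a)"
  define X where "X = (if 2 \<le> a then hook_limit Q (a - 1) b else 0)
      + (if 1 \<le> b then hook_limit Q a (b - 1) else 0) + (if a = 1 \<and> b = 0 then 1 else 0)"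
  have lhs: "hook_pspec Q a b (Suc m) = hook_limit Q a b * (P * (1 - Q ^ (m + a)))"
    unfolding hook_pspec_def P_def using a m by (simp add: Suc_diff_le qprod_Suc_right)
  have "hook_pspec Q a b m = hook_limit Q a b * ((1 - Q ^ d) * P)"
    unfolding hook_pspec_def P_def using a m by (simp add: qprod_Suc_left)
  moreover have "(if 2 \<le> a then Q ^ m * hook_pspec Q (a - 1) b (Suc m) else if b = 0 then Q ^ m else 0)
      + (if 1 \<le> b then Q ^ m * hook_pspec Q a (b - 1) m else 0) = Q ^ m * (X * P)"
    unfolding X_def P_def hook_pspec_def using a m by (auto simp: Suc_diff_le qprod_empty algebra_simps)
  ultimately have "hook_pspec Q a b m + (if 2 \<le> a then Q ^ m * hook_pspec Q (a - 1) b (Suc m)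
        else if b = 0 then Q ^ m else 0) + (if 1 \<le> b then Q ^ m * hook_pspec Q a (b - 1) m else 0)
      = hook_limit Q a b * ((1 - Q ^ d) * P) + Q ^ d * ((Q ^ b * X) * P)"
    unfolding m by (simp add: power_add algebra_simps)
  also have "Q ^ b * X = hook_limit Q a b * (1 - Q ^ (a + b))"
    unfolding X_def using hook_limit_recursion[OF Q a] by simp
  also have "hook_limit Q a b * ((1 - Q ^ d) * P) + Q ^ d * (hook_limit Q a b * (1 - Q ^ (a + b)) * P)
      = hook_limit Q a b * (P * (1 - Q ^ (m + a)))"
    unfolding m by (simp add: power_add algebra_simps)
  finally show ?thesis unfolding lhs ..
qed

lemma schur_hook_principal:
  assumes Q: "0 < Q" "Q < 1"
  shows "0 < a \<Longrightarrow> schur (hook a b) m (\<lambda>i. Q ^ i) = hook_pspec Q a b m"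
proof (induction m arbitrary: a b)
  case 0
  thus ?case by (simp add: schur_hook_zero_vars hook_pspec_eq_0)
next
  case (Suc m)
  note IH = Suc.IH
  show ?case using Suc.prems
  proof (induction a arbitrary: b rule: nat_induct_non_zero)
    case 1
    show ?case using schur_hook_Suc[of 1] hook_pspec_Suc[OF Q, of 1] IH by simp
  next
    case (Suc a)
    show ?case using schur_hook_Suc[of "Suc a"] hook_pspec_Suc[OF Q, of "Suc a"] IH Suc.IH Suc.hyps
      by simp
  qed
qed

lemma hook_pspec_tendsto:
  assumes Q: "0 < Q" "Q < 1"
  shows "(\<lambda>m. hook_pspec Q a b m) \<longlonglongrightarrow> hook_limit Q a b"
proof (rule LIMSEQ_offset[where k = b])
  have "hook_pspec Q a b (n + b) = hook_limit Q a b * (\<Prod>i<a + b. 1 - Q ^ n * Q ^ i)" for n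
    unfolding hook_pspec_def using qprod_shift[of Q n "a + b"] by (simp add: power_add ac_simps)
  moreover have "(\<lambda>n. hook_limit Q a b * (\<Prod>i<a + b. 1 - Q ^ n * Q ^ i))
      \<longlonglongrightarrow> hook_limit Q a b * (\<Prod>i<a + b. 1 - 0 * Q ^ i)"
    using Q by (intro tendsto_intros LIMSEQ_realpow_zero) auto
  ultimately show "(\<lambda>n. hook_pspec Q a b (n + b)) \<longlonglongrightarrow> hook_limit Q a b" by simp
qed

lemma schur_pspec_hook:
  "0 < q \<Longrightarrow> q < 1 \<Longrightarrow> 0 < a \<Longrightarrow> schur_pspec (hook a b) m q = hook_pspec (q ^ 2) a b m"
  unfolding schur_pspec_def power_mult
  by (rule schur_hook_principal) (auto simp: power_less_one_iff)

lemma schur_pspec_inf_hook: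
  assumes "0 < q" "q < 1" "0 < a"
  shows "schur_pspec_inf (hook a b) q = hook_limit (q ^ 2) a b"
  unfolding schur_pspec_inf_def schur_pspec_hook[OF assms]
  using assms by (intro limI hook_pspec_tendsto) (auto simp: power_less_one_iff)

section \<open>Reflection of \<open>q\<close>-Pochhammer symbols and the moment\<close>

text \<open>For \<open>r \<ge> n\<close> both sides vanish, the right one because \<open>n - r = 0\<close>.\<close>
lemma qpoch_reflect:
  assumes q: "q \<noteq> 0" and n: "0 < n"
  shows "qpoch (q powi (2 - 2 * int n)) (q ^ 2) r * (q ^ 2) ^ (n * r)
       = (-1) ^ r * (q ^ 2) ^ (r * (r + 1) div 2) * qprod (q ^ 2) (n - r) n"
proof (induction r)
  case 0
  thus ?case by (simp add: qpoch_def qprod_empty)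
next
  case (Suc r)
  define Q where "Q = q ^ 2"
  have "q powi (2 - 2 * int n + 2 * int n) = q powi (2 - 2 * int n) * q powi (2 * int n)"
    by (rule power_int_add) (use q in simp)
  moreover have "q powi (2 * int n) = Q ^ n"
    unfolding Q_def by (simp add: power_int_mult)
  ultimately have "q powi (2 - 2 * int n) * Q ^ n = Q" unfolding Q_def by simp
  hence step: "(1 - q powi (2 - 2 * int n) * Q ^ r) * Q ^ n = Q ^ n - Q ^ Suc r"
    by (simp add: algebra_simps)
  have key: "qprod Q (n - r) n * (Q ^ n - Q ^ Suc r) = - (Q ^ Suc r * qprod Q (n - Suc r) n)"
  proof (cases "r < n")
    case True
    hence split: "qprod Q (n - Suc r) n = (1 - Q ^ (n - Suc r)) * qprod Q (n - r) n"
      using qprod_Suc_left[of "n - Suc r" n Q] by (simp add: Suc_diff_Suc)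
    have "Q ^ n = Q ^ Suc r * Q ^ (n - Suc r)"
      using True by (simp only: power_add [symmetric] add_diff_inverse_nat not_less_eq less_imp_le_nat)
    thus ?thesis unfolding split by (simp add: algebra_simps)
  qed (use n in \<open>simp add: qprod_from_0\<close>)
  have "qpoch (q powi (2 - 2 * int n)) Q (Suc r) * Q ^ (n * Suc r)
      = (qpoch (q powi (2 - 2 * int n)) Q r * Q ^ (n * r)) * ((1 - q powi (2 - 2 * int n) * Q ^ r) * Q ^ n)"
    by (simp add: qpoch_Suc power_add ac_simps)
  also have "\<dots> = (-1) ^ r * Q ^ (r * (r + 1) div 2) * (qprod Q (n - r) n * (Q ^ n - Q ^ Suc r))"
    unfolding step using Suc.IH unfolding Q_def by simp
  also have "\<dots> = (-1) ^ Suc r * Q ^ (Suc r * (Suc r + 1) div 2) * qprod Q (n - Suc r) n"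
    unfolding key triangular_Suc by (simp add: power_add)
  finally show ?case unfolding Q_def .
qed

lemma phi32_term_eq_qprod:
  assumes q: "0 < q" "q < 1" and r: "r < k" and N: "1 \<le> N"
  defines "Q \<equiv> q ^ 2"
  shows "qpoch (q powi (2 - 2 * int k)) Q r * qpoch (q powi (2 - 2 * int N)) Q r
         * qpoch (q powi (2 - 2 * int N - 2 * int alpha)) Q r
       / (qpoch (q powi (2 - 2 * int N - 2 * int k)) Q r
         * qpoch (q powi (2 - 2 * int N - 2 * int alpha - 2 * int k)) Q r * qpoch Q Q r)
       * (q powi (- 2 * int k)) ^ r
     = (-1) ^ r * Q ^ (r * (r + 1) div 2)
         * qprod Q (k - r) k * qprod Q (N - r) N * qprod Q (N + alpha - r) (N + alpha)
       / (qprod Q (N + k - r) (N + k) * qprod Q (N + alpha + k - r) (N + alpha + k) * qprod Q 1 (Suc r))"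
proof -
  have Q: "0 < Q" "Q < 1" unfolding Q_def using q by (auto simp: power_less_one_iff)
  define s where "s = (-1 :: real) ^ r * Q ^ (r * (r + 1) div 2)"
  have s: "s \<noteq> 0" unfolding s_def using Q by simp
  have reflect: "qpoch (q powi (2 - 2 * int n)) Q r = s * qprod Q (n - r) n / Q ^ (n * r)" if "0 < n" for n
    using qpoch_reflect[of q n r] q that Q unfolding Q_def s_def by (simp add: field_simps)
  have "q powi (- 2 * int k) = inverse (Q ^ k)"
    unfolding Q_def by (simp add: power_int_mult power_int_minus flip: power_mult)
  hence z: "(q powi (- 2 * int k)) ^ r = 1 / Q ^ (k * r)" by (simp add: power_mult divide_inverse power_inverse)
  have args: "2 - 2 * int N - 2 * int alpha = 2 - 2 * int (N + alpha)"
    "2 - 2 * int N - 2 * int k = 2 - 2 * int (N + k)"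
    "2 - 2 * int (N + alpha) - 2 * int k = 2 - 2 * int (N + alpha + k)" by simp_all
  have R: "qpoch Q Q r = qprod Q 1 (Suc r)" using qpoch_eq_qprod[of Q 1 r] by simp
  have "qprod Q (N + k - r) (N + k) \<noteq> 0" "qprod Q (N + alpha + k - r) (N + alpha + k) \<noteq> 0"
    "qprod Q 1 (Suc r) \<noteq> 0"
    using qprod_pos[OF Q] r N by (simp_all add: less_imp_neq[symmetric])
  moreover have pos: "0 < k" "0 < N" "0 < N + alpha" "0 < N + k" "0 < N + alpha + k" using r N by auto
  ultimately show ?thesis
    unfolding args reflect[OF pos(1)] reflect[OF pos(2)] reflect[OF pos(3)] reflect[OF pos(4)]
      reflect[OF pos(5)] z R s_def[symmetric]
    using Q s by (simp add: field_simps power_add add_mult_distrib)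
qed

lemma E_schur_hook:
  assumes "0 < q" "q < 1" "r < k"
  shows "E_schur q alpha N (hook (k - r) r) = q powi (int k * (2 - 2 * int N - int alpha)) / (1 - q ^ 2) ^ k *
     (hook_pspec (q ^ 2) (k - r) r N * hook_pspec (q ^ 2) (k - r) r (N + alpha) / hook_limit (q ^ 2) (k - r) r)"
proof -
  have "sum_list (hook (k - r) r) = k" using assms(3) by (simp add: hook_def sum_list_replicate)
  moreover have "0 < k - r" using assms(3) by simp
  ultimately show ?thesis
    unfolding E_schur_def Let_def using schur_pspec_hook schur_pspec_inf_hook assms by simp
qed

lemma hook_limit_mult_qprod:
  assumes Q: "0 < Q" "Q < 1" and r: "r < k"
  shows "hook_limit Q (k - r) r * qprod Q (N - r) (N + k - r) * qprod Q (M - r) (M + k - r)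
    = qprod Q N (N + k) * qprod Q M (M + k) / qprod Q 1 (Suc k) *
      (Q ^ (r * (r + 1) div 2) * qprod Q (k - r) k * qprod Q (N - r) N * qprod Q (M - r) M
       / (qprod Q (N + k - r) (N + k) * qprod Q (M + k - r) (M + k) * qprod Q 1 (Suc r)))"
proof -
  have concat: "qprod Q n (n + k) * qprod Q (n - r) n = qprod Q (n - r) (n + k - r) * qprod Q (n + k - r) (n + k)"
    for n using r by (simp add: qprod_concat mult.commute[of "qprod Q n _"])
  have full: "qprod Q 1 (Suc k) = qprod Q 1 (k - r) * qprod Q (k - r) k * (1 - Q ^ k)"
    using r qprod_concat[of 1 "k - r" k Q] qprod_Suc_right[of 1 k Q] by simp
  have nonzero: "1 - Q ^ k \<noteq> 0" "qprod Q 1 (k - r) \<noteq> 0" "qprod Q 1 (Suc r) \<noteq> 0"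
    "qprod Q (k - r) k \<noteq> 0" "qprod Q (N + k - r) (N + k) \<noteq> 0" "qprod Q (M + k - r) (M + k) \<noteq> 0"
    using Q r qprod_pos[OF Q] power_neq_one[OF Q, of k] by (simp_all add: less_imp_neq[symmetric])
  have "qprod Q N (N + k) * qprod Q M (M + k) / qprod Q 1 (Suc k) *
      (Q ^ (r * (r + 1) div 2) * qprod Q (k - r) k * qprod Q (N - r) N * qprod Q (M - r) M
       / (qprod Q (N + k - r) (N + k) * qprod Q (M + k - r) (M + k) * qprod Q 1 (Suc r)))
    = Q ^ (r * (r + 1) div 2) * (qprod Q N (N + k) * qprod Q (N - r) N)
      * (qprod Q M (M + k) * qprod Q (M - r) M) * qprod Q (k - r) k
      / (qprod Q 1 (Suc k) * qprod Q (N + k - r) (N + k) * qprod Q (M + k - r) (M + k) * qprod Q 1 (Suc r))"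
    by (simp add: ac_simps)
  also have "\<dots> = hook_limit Q (k - r) r * qprod Q (N - r) (N + k - r) * qprod Q (M - r) (M + k - r)"
    unfolding concat full hook_limit_def using r nonzero by (simp add: field_simps)
  finally show ?thesis ..
qed

lemma signed_E_schur_hook_eq_phi32_term:
  assumes q: "0 < q" "q < 1" and r: "r < k" and N: "1 \<le> N"
  shows "(-1) ^ r * E_schur q alpha N (hook (k - r) r) =
    q powi (int k * (2 - 2 * int N - int alpha)) / (1 - q ^ 2) ^ k *
    (qpoch (q ^ (2 * N)) (q ^ 2) k * qpoch (q ^ (2 * N + 2 * alpha)) (q ^ 2) k / qpoch (q ^ 2) (q ^ 2) k) *
    (qpoch (q powi (2 - 2 * int k)) (q ^ 2) r * qpoch (q powi (2 - 2 * int N)) (q ^ 2) r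
       * qpoch (q powi (2 - 2 * int N - 2 * int alpha)) (q ^ 2) r
     / (qpoch (q powi (2 - 2 * int N - 2 * int k)) (q ^ 2) r
       * qpoch (q powi (2 - 2 * int N - 2 * int alpha - 2 * int k)) (q ^ 2) r * qpoch (q ^ 2) (q ^ 2) r)
     * (q powi (- 2 * int k)) ^ r)"
proof -
  define Q where "Q = q ^ 2"
  have Q: "0 < Q" "Q < 1" unfolding Q_def using q by (auto simp: power_less_one_iff)
  have "q ^ (2 * N) = Q ^ N" "q ^ (2 * N + 2 * alpha) = Q ^ (N + alpha)"
    unfolding Q_def power_mult[symmetric] by (simp_all add: distrib_left)
  hence qpochs: "qpoch (q ^ (2 * N)) Q k = qprod Q N (N + k)"
    "qpoch (q ^ (2 * N + 2 * alpha)) Q k = qprod Q (N + alpha) (N + alpha + k)"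
    "qpoch Q Q k = qprod Q 1 (Suc k)"
    using qpoch_eq_qprod[of Q 1 k] by (simp_all add: qpoch_eq_qprod)
  have "hook_limit Q (k - r) r \<noteq> 0"
    unfolding hook_limit_def using Q r qprod_pos[OF Q] power_neq_one[OF Q, of k]
    by (simp add: less_imp_neq[symmetric])
  hence "E_schur q alpha N (hook (k - r) r) = q powi (int k * (2 - 2 * int N - int alpha)) / (1 - Q) ^ k *
      (hook_limit Q (k - r) r * qprod Q (N - r) (N + k - r) * qprod Q (N + alpha - r) (N + alpha + k - r))"
    unfolding E_schur_hook[OF q r] hook_pspec_def Q_def using r by (simp add: add.assoc)
  thus ?thesis
    unfolding hook_limit_mult_qprod[OF Q r] phi32_term_eq_qprod[OF q r N, folded Q_def] qpochs
      Q_def[symmetric]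
    by (simp add: ac_simps)
qed

theorem mainTheorem4:
  fixes q :: real and alpha k N :: nat
  assumes "0 < q" "q < 1" "1 \<le> k" "1 \<le> N"
  shows "moment q alpha k N =
    q powi (int k * (2 - 2 * int N - int alpha)) / (real N * (1 - q^2) ^ k) *
    (qpoch (q ^ (2 * N)) (q^2) k * qpoch (q ^ (2 * N + 2 * alpha)) (q^2) k / qpoch (q^2) (q^2) k) *
    phi32_trunc (q powi (2 - 2 * int k)) (q powi (2 - 2 * int N))
                (q powi (2 - 2 * int N - 2 * int alpha))
                (q powi (2 - 2 * int N - 2 * int k)) (q powi (2 - 2 * int N - 2 * int alpha - 2 * int k))
                (q^2) (q powi (- 2 * int k)) k"
proof -
  have "moment q alpha k N = 1 / real N * (\<Sum>r<k. (-1) ^ r * E_schur q alpha N (hook (k - r) r))"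
    unfolding moment_def chi_cycle_eq_cycle_character[OF assms(3)] sum_cycle_character ..
  also have "(\<Sum>r<k. (-1) ^ r * E_schur q alpha N (hook (k - r) r)) =
    q powi (int k * (2 - 2 * int N - int alpha)) / (1 - q ^ 2) ^ k *
    (qpoch (q ^ (2 * N)) (q ^ 2) k * qpoch (q ^ (2 * N + 2 * alpha)) (q ^ 2) k / qpoch (q ^ 2) (q ^ 2) k) *
    phi32_trunc (q powi (2 - 2 * int k)) (q powi (2 - 2 * int N))
                (q powi (2 - 2 * int N - 2 * int alpha))
                (q powi (2 - 2 * int N - 2 * int k)) (q powi (2 - 2 * int N - 2 * int alpha - 2 * int k))
                (q ^ 2) (q powi (- 2 * int k)) k"
    unfolding phi32_trunc_def sum_distrib_left
    using signed_E_schur_hook_eq_phi32_term[OF assms(1,2) _ assms(4)] by simp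
  finally show ?thesis by simp
qed

end
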